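(* Let $n\ge2$, let $a_1,\dots,a_n$ be positive integers, let $1\le k\le n$ with $a_k>1$, and let $s=[2a_1,-2a_2,\dots,(-1)^{k-1}2a_k,\dots,(-1)^{n-1}2a_n]$ and $r=[2a_1,-2a_2,\dots,(-1)^{k-1}2(a_k-1),\dots,(-1)^{n-1}2a_n]$ (the same sequence with $a_k$ replaced by $a_k-1$). Then $\Delta_{K(s)}$ and $\Delta_{K(r)}$ have only real zeros and $\delta(K(s))<\delta(K(r))$, where $\delta(K)$ denotes the largest zero of $\Delta_K(t)$.
   Context: For a finite sequence $r=[2a_1,2a_2,\dots,2a_n]$ of nonzero even integers, $K(r)$ denotes the 2-bridge knot or link whose associated rational number has the even continued fraction expansion $1/(2a_1-1/(2a_2-\cdots-1/(2a_n)))$. Let $M(r)$ be the $n\times n$ integer matrix whose $(k,k)$-entry is $a_k$, whose $(k,k+1)$-entry is $1$ ($1\le k\le n-1$), and whose other entries are $0$; $\Delta_{K(r)}(t)=\det(tM(r)-M(r)^T)$ is the (reduced) Alexander polynomial of $K(r)$ (up to sign). *)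

theory Defs
  imports "Jordan_Normal_Form.Determinant" "HOL-Computational_Algebra.Polynomial"
begin

definition M_mat :: "int list \<Rightarrow> int mat" where
  "M_mat r = mat (length r) (length r)
     (\<lambda>(i,j). if i = j then r ! i div 2 else if j = i + 1 then 1 else 0)"

definition alexander_poly :: "int list \<Rightarrow> int poly" where
  "alexander_poly r = det (map_mat (\<lambda>x. [:0, x:]) (M_mat r)
                          - map_mat (\<lambda>x. [:x:]) (transpose_mat (M_mat r)))"

definition only_real_zeros :: "int poly \<Rightarrow> bool" where
  "only_real_zeros p \<longleftrightarrow> (\<forall>z::complex. poly (map_poly of_int p) z = 0 \<longrightarrow> z \<in> \<real>)"

definition delta :: "int list \<Rightarrow> real" where
  "delta r = Max {x::real. poly (map_poly of_int (alexander_poly r)) x = 0}"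

definition alt_seq :: "(nat \<Rightarrow> int) \<Rightarrow> nat \<Rightarrow> int list" where
  "alt_seq a n = map (\<lambda>i. (-1) ^ (i - 1) * (2 * a i)) [1..<n+1]"

end

theory Submission
  imports Defs
begin

text \<open>
  Expanding det(t M - M^T) along its last row gives a three-term recurrence. Substituting
  t = \<sigma>^2 and \<mu> = \<sigma> - 1/\<sigma>, the Alexander polynomial becomes, up to sign and the factor \<sigma>^n,
  the continuant Q_n(\<mu>) defined by Q_k = a_k \<mu> Q_(k-1) - Q_(k-2). The Christoffel-Darboux
  identity for continuants shows that every zero \<mu> of Q_n is real, and a real \<mu> forces \<sigma> to be
  real, so every zero t = \<sigma>^2 is real and positive. Applied to the continuants of two coefficient
  sequences at their largest zeros, the same identity shows that lowering one coefficient
  strictly raises the largest zero of Q_n; since \<mu> \<mapsto> \<sigma>^2 is increasing, \<delta> increases.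
\<close>


definition tridiag :: "nat \<Rightarrow> (nat \<Rightarrow> 'a::comm_ring_1) \<Rightarrow> 'a \<Rightarrow> 'a \<Rightarrow> 'a mat" where
  "tridiag n d u l = mat n n (\<lambda>(i, j).
     if i = j then d i else if j = i + 1 then u else if i = j + 1 then l else 0)"

lemma tridiag_carrier [simp]: "tridiag n d u l \<in> carrier_mat n n"
  by (simp add: tridiag_def)

lemma det_tridiag_1 [simp]: "det (tridiag (Suc 0) d u l) = d 0"
  by (simp add: det_single tridiag_def)

lemma det_tridiag_Suc_Suc:
  "det (tridiag (Suc (Suc k)) d u l)
     = d (Suc k) * det (tridiag (Suc k) d u l) - u * l * det (tridiag k d u l)"
proof -
  let ?A = "tridiag (Suc (Suc k)) d u l"
  define B where "B = mat_delete ?A (Suc k) k"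
  have B_carrier: "B \<in> carrier_mat (Suc k) (Suc k)"
    unfolding B_def using mat_delete_carrier[OF tridiag_carrier[of "Suc (Suc k)"]] by simp
  have det_B: "det B = u * det (tridiag k d u l)"
  proof -
    have "mat_delete B k k = tridiag k d u l"
      unfolding B_def by (rule eq_matI) (auto simp: mat_delete_def tridiag_def)
    moreover have "B $$ (i, k) = (if i = k then u else 0)" if "i < Suc k" for i
      using that by (auto simp: B_def mat_delete_def tridiag_def)
    ultimately show ?thesis
      by (simp add: laplace_expansion_column[OF B_carrier, of k] cofactor_def)
  qed
  have row: "?A $$ (Suc k, j) = (if j = Suc k then d (Suc k) else if j = k then l else 0)"
    if "j < Suc (Suc k)" for j
    using that by (auto simp: tridiag_def)
  have "mat_delete ?A (Suc k) (Suc k) = tridiag (Suc k) d u l"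
    by (rule eq_matI) (auto simp: mat_delete_def tridiag_def)
  moreover have "det ?A = (\<Sum>j<Suc (Suc k). ?A $$ (Suc k, j) * cofactor ?A (Suc k) j)"
    by (rule laplace_expansion_row) auto
  ultimately show ?thesis
    by (simp add: row cofactor_def det_B[unfolded B_def] algebra_simps)
qed

lemma det_tridiag_lower_triangular: "det (tridiag n d 0 l) = (\<Prod>i<n. d i)"
  by (subst det_lower_triangular[of n])
    (auto simp: tridiag_def prod_list_diag_prod atLeast0LessThan)

lemma map_poly_of_int_mult:
  "map_poly (of_int :: int \<Rightarrow> 'a::comm_ring_1) (p * q) = map_poly of_int p * map_poly of_int q"
  by (rule poly_eqI) (simp add: coeff_map_poly coeff_mult of_int_sum)

lemma comm_ring_hom_poly_map_poly_of_int:
  "comm_ring_hom (\<lambda>p. poly (map_poly (of_int :: int \<Rightarrow> 'a::comm_ring_1) p) x)"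
proof unfold_locales
  fix p q :: "int poly"
  have "map_poly of_int (p + q) = map_poly (of_int :: int \<Rightarrow> 'a) p + map_poly of_int q"
    by (rule poly_eqI) (simp add: coeff_map_poly)
  then show "poly (map_poly of_int (p + q)) x
      = poly (map_poly of_int p) x + poly (map_poly (of_int :: int \<Rightarrow> 'a) q) x"
    by simp
qed (simp_all add: map_poly_of_int_mult map_poly_1)

lemma alt_seq_nth_div_2: "i < n \<Longrightarrow> alt_seq a n ! i div 2 = (-1) ^ i * a (Suc i)"
  by (simp del: upt_Suc add: alt_seq_def)

lemma poly_alexander_poly_alt_seq:
  "poly (map_poly (of_int :: int \<Rightarrow> 'a::comm_ring_1) (alexander_poly (alt_seq a n))) x
     = det (tridiag n (\<lambda>i. (-1) ^ i * of_int (a (Suc i)) * (x - 1)) x (-1))"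
proof -
  interpret eval: comm_ring_hom "\<lambda>p. poly (map_poly (of_int :: int \<Rightarrow> 'a) p) x"
    by (rule comm_ring_hom_poly_map_poly_of_int)
  have [simp]: "length (alt_seq a n) = n"
    by (simp add: alt_seq_def)
  show ?thesis
    unfolding alexander_poly_def eval.hom_det[symmetric]
    by (rule arg_cong[of _ _ det], rule eq_matI)
      (auto simp: M_mat_def tridiag_def alt_seq_nth_div_2 map_poly_pCons algebra_simps)
qed

fun continuant :: "(nat \<Rightarrow> 'a::comm_ring_1) \<Rightarrow> nat \<Rightarrow> 'a poly" where
  "continuant b 0 = 1"
| "continuant b (Suc 0) = [:0, b 1:]"
| "continuant b (Suc (Suc k)) = [:0, b (Suc (Suc k)):] * continuant b (Suc k) - continuant b k"

lemma poly_continuant_Suc_Suc: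
  "poly (continuant b (Suc (Suc k))) x
     = b (Suc (Suc k)) * x * poly (continuant b (Suc k)) x - poly (continuant b k) x"
  by (simp add: algebra_simps)

text \<open>alexander_sign k = (-1)^(k(k-1)/2).\<close>
fun alexander_sign :: "nat \<Rightarrow> 'a::comm_ring_1" where
  "alexander_sign 0 = 1"
| "alexander_sign (Suc k) = (-1) ^ k * alexander_sign k"

lemma alexander_sign_nonzero: "alexander_sign k \<noteq> (0 :: 'a::idom)"
  by (induction k) auto

lemma det_tridiag_continuant:
  fixes s :: "'a::field"
  assumes "s \<noteq> 0"
  shows "det (tridiag k (\<lambda>i. (-1) ^ i * b (Suc i) * (s\<^sup>2 - 1)) (s\<^sup>2) (-1))
           = alexander_sign k * s ^ k * poly (continuant b k) (s - 1 / s)"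
proof (induction k rule: induct_nat_012)
  case (ge2 k)
  then show ?case
    using assms
    by (simp only: det_tridiag_Suc_Suc poly_continuant_Suc_Suc) (simp add: field_simps power2_eq_square)
qed (use assms in \<open>simp_all add: field_simps power2_eq_square\<close>)

lemma poly_alexander_poly_alt_seq_square:
  fixes s :: "'a::field"
  assumes "s \<noteq> 0"
  shows "poly (map_poly of_int (alexander_poly (alt_seq a n))) (s\<^sup>2)
           = alexander_sign n * s ^ n * poly (continuant (\<lambda>i. of_int (a i)) n) (s - 1 / s)"
  using det_tridiag_continuant[OF assms, of n "\<lambda>i. of_int (a i)"]
  by (simp add: poly_alexander_poly_alt_seq)

lemma poly_alexander_poly_alt_seq_0:
  assumes "\<forall>i\<in>{1..n}. a i \<noteq> 0"
  shows "poly (map_poly (of_int :: int \<Rightarrow> 'a::{idom,ring_char_0}) (alexander_poly (alt_seq a n))) 0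
           \<noteq> 0"
  using assms by (simp add: poly_alexander_poly_alt_seq det_tridiag_lower_triangular)

lemma continuant_christoffel_darboux:
  "(\<Sum>j<Suc n. (x * b (Suc j) - y * c (Suc j)) * poly (continuant b j) x * poly (continuant c j) y)
     = poly (continuant b (Suc n)) x * poly (continuant c n) y
       - poly (continuant c (Suc n)) y * poly (continuant b n) x"
proof (induction n)
  case (Suc n)
  then show ?case
    by (simp only: sum.lessThan_Suc poly_continuant_Suc_Suc) (simp add: algebra_simps)
qed (simp add: algebra_simps)

lemma poly_continuant_cnj:
  "poly (continuant (\<lambda>i. complex_of_real (b i)) k) (cnj z)
     = cnj (poly (continuant (\<lambda>i. complex_of_real (b i)) k) z)"
  by (induction k rule: induct_nat_012) (simp_all only: poly_continuant_Suc_Suc, simp_all)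

lemma continuant_root_real:
  fixes b :: "nat \<Rightarrow> real"
  assumes pos: "\<forall>i\<in>{1..n}. b i > 0"
    and root: "poly (continuant (\<lambda>i. complex_of_real (b i)) n) \<mu> = 0"
  shows "\<mu> \<in> \<real>"
proof (cases n)
  case 0
  with root show ?thesis by simp
next
  case (Suc m)
  let ?Q = "\<lambda>j. poly (continuant (\<lambda>i. complex_of_real (b i)) j)"
  define R where "R = (\<Sum>j<Suc m. b (Suc j) * (cmod (?Q j \<mu>))\<^sup>2)"
  have "(\<mu> - cnj \<mu>) * of_real R
          = (\<Sum>j<Suc m. (\<mu> * b (Suc j) - cnj \<mu> * b (Suc j)) * ?Q j \<mu> * ?Q j (cnj \<mu>))"
    unfolding R_def of_real_sum sum_distrib_left
    by (rule sum.cong) (simp_all add: poly_continuant_cnj algebra_simps flip: complex_norm_square)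
  also have "\<dots> = ?Q (Suc m) \<mu> * ?Q m (cnj \<mu>) - ?Q (Suc m) (cnj \<mu>) * ?Q m \<mu>"
    by (rule continuant_christoffel_darboux)
  also have "\<dots> = 0"
    using root Suc by (simp add: poly_continuant_cnj)
  finally have "(\<mu> - cnj \<mu>) * of_real R = 0" .
  moreover have "R > 0"
  proof -
    have b_pos: "b (Suc j) > 0" if "j < Suc m" for j
      using pos Suc that by auto
    show ?thesis
      unfolding R_def
    proof (rule sum_pos2[where i = 0])
      show "0 < b (Suc 0) * (cmod (?Q 0 \<mu>))\<^sup>2"
        using b_pos[of 0] by simp
    qed (auto intro!: mult_nonneg_nonneg simp: b_pos less_imp_le)
  qed
  ultimately have "cnj \<mu> = \<mu>"
    by simp
  then show ?thesis
    by (simp add: Reals_cnj_iff)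
qed

lemma minus_recip_real_imp_real:
  fixes s :: complex
  assumes "s \<noteq> 0" and "s - 1 / s \<in> \<real>"
  shows "s \<in> \<real>"
proof -
  from assms(2) obtain m where m: "s - 1 / s = of_real m"
    by (auto elim: Reals_cases)
  txt \<open>s solves s^2 - m s - 1 = 0, whose discriminant m^2 + 4 is positive.\<close>
  define r where "r = complex_of_real (sqrt (m\<^sup>2 + 4))"
  have "r\<^sup>2 = (s - 1 / s)\<^sup>2 + 4"
    unfolding r_def m by (simp flip: of_real_power)
  then have "(2 * s - (s - 1 / s))\<^sup>2 = r\<^sup>2"
    using assms(1) by (simp add: field_simps power2_eq_square)
  then have "2 * s - of_real m = r \<or> 2 * s - of_real m = - r"
    by (simp add: power2_eq_iff m)
  then have "2 * s \<in> \<real>"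
    unfolding r_def by (metis Reals_of_real Reals_add Reals_minus diff_add_cancel)
  then show ?thesis
    using Reals_divide[of "2 * s" 2] by simp
qed

lemma alexander_poly_alt_seq_root_pos_real:
  assumes pos: "\<forall>i\<in>{1..n}. a i > 0"
    and root: "poly (map_poly of_int (alexander_poly (alt_seq a n))) z = (0 :: complex)"
  shows "\<exists>x>0. z = of_real x"
proof -
  have "z \<noteq> 0"
    using root poly_alexander_poly_alt_seq_0[of n a] pos by force
  define s where "s = csqrt z"
  have "s \<noteq> 0" and s2: "s\<^sup>2 = z"
    using \<open>z \<noteq> 0\<close> by (auto simp: s_def)
  have "poly (continuant (\<lambda>i. complex_of_real (of_int (a i))) n) (s - 1 / s) = 0"
    using root poly_alexander_poly_alt_seq_square[OF \<open>s \<noteq> 0\<close>, of a n] \<open>s \<noteq> 0\<close>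
    by (simp add: s2 alexander_sign_nonzero)
  then have "s - 1 / s \<in> \<real>"
    using pos by (intro continuant_root_real[where b = "\<lambda>i. of_int (a i)"]) auto
  then obtain r where "s = of_real r" and "r \<noteq> 0"
    using minus_recip_real_imp_real \<open>s \<noteq> 0\<close> by (metis Reals_cases of_real_0)
  then show ?thesis
    using s2 by (intro exI[of _ "r\<^sup>2"]) auto
qed

lemma only_real_zeros_alexander_poly_alt_seq:
  "\<forall>i\<in>{1..n}. a i > 0 \<Longrightarrow> only_real_zeros (alexander_poly (alt_seq a n))"
  unfolding only_real_zeros_def by (metis alexander_poly_alt_seq_root_pos_real Reals_of_real)

lemma poly_map_poly_of_int_of_real:
  "poly (map_poly of_int p) (of_real x :: 'a::{real_algebra_1,comm_ring_1})
     = of_real (poly (map_poly of_int p) x)"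
  by (simp add: poly_altdef degree_map_poly coeff_map_poly)

lemma alexander_poly_alt_seq_real_root_pos:
  assumes "\<forall>i\<in>{1..n}. a i > 0"
    and "poly (map_poly of_int (alexander_poly (alt_seq a n))) x = (0 :: real)"
  shows "x > 0"
  using alexander_poly_alt_seq_root_pos_real[OF assms(1), of "of_real x"] assms(2)
  by (auto simp: poly_map_poly_of_int_of_real)

lemma continuant_ge_one:
  fixes b :: "nat \<Rightarrow> real"
  assumes b: "\<forall>i\<in>{1..n}. b i \<ge> 1" and x: "x \<ge> 2" and "j \<le> n"
  shows "poly (continuant b j) x \<ge> 1"
proof -
  have chain:
    "1 \<le> poly (continuant b j) x \<and> poly (continuant b j) x \<le> poly (continuant b (Suc j)) x"
    if "Suc j \<le> n" for j
    using that
  proof (induction j)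
    case 0
    have "b 1 \<ge> 1"
      using b 0 by auto
    then have "1 * 2 \<le> b 1 * x"
      using x by (intro mult_mono) auto
    then show ?case
      by (simp add: mult.commute)
  next
    case (Suc j)
    then have IH: "1 \<le> poly (continuant b j) x"
      "poly (continuant b j) x \<le> poly (continuant b (Suc j)) x"
      by auto
    have "b (Suc (Suc j)) \<ge> 1"
      using b Suc.prems by auto
    then have "1 * 2 \<le> b (Suc (Suc j)) * x"
      using x by (intro mult_mono) auto
    then have
      "2 * poly (continuant b (Suc j)) x \<le> b (Suc (Suc j)) * x * poly (continuant b (Suc j)) x"
      using IH by (intro mult_right_mono) auto
    then show ?case
      using IH by (simp only: poly_continuant_Suc_Suc) linarith
  qed
  show ?thesis
    using \<open>j \<le> n\<close> chain[of "j - 1"] by (cases j) auto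
qed

lemma poly_nonneg_right_of_roots:
  fixes p :: "real poly"
  assumes no_root: "\<forall>y>a. poly p y \<noteq> 0" and "a < b" and "poly p b > 0" and "a \<le> x"
  shows "poly p x \<ge> 0"
proof (rule ccontr)
  assume "\<not> poly p x \<ge> 0"
  then have neg: "poly p x < 0"
    by simp
  obtain y where "min x b < y" and "poly p y = 0"
  proof (cases "x < b")
    case True
    then show ?thesis
      using poly_IVT_pos[OF True neg \<open>poly p b > 0\<close>] that by auto
  next
    case False
    then have "b < x"
      using neg \<open>poly p b > 0\<close> by (cases "b = x") auto
    then show ?thesis
      using poly_IVT_neg[OF \<open>b < x\<close> \<open>poly p b > 0\<close> neg] that by auto
  qed
  with no_root \<open>a < b\<close> \<open>a \<le> x\<close> show False
    by auto
qed

lemma continuant_pos_of_nonneg: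
  fixes x :: "'a::linordered_idom"
  assumes nonneg: "\<forall>j\<le>n. poly (continuant b j) x \<ge> 0" and "j < n"
  shows "poly (continuant b j) x > 0"
  using \<open>j < n\<close>
proof (induction j)
  case (Suc j)
  show ?case
  proof (rule ccontr)
    assume "\<not> poly (continuant b (Suc j)) x > 0"
    then have "poly (continuant b (Suc j)) x = 0"
      using nonneg[rule_format, of "Suc j"] Suc.prems by simp
    then have "poly (continuant b (Suc (Suc j))) x < 0"
      using Suc by (simp only: poly_continuant_Suc_Suc) simp
    with nonneg[rule_format, of "Suc (Suc j)"] Suc.prems show False
      by simp
  qed
qed simp

lemma continuant_nonneg_beyond_roots:
  fixes b :: "nat \<Rightarrow> real"
  assumes b: "\<forall>i\<in>{1..n}. b i \<ge> 1"
    and no_root: "\<forall>j\<in>{1..n}. \<forall>\<mu>>m. poly (continuant b j) \<mu> \<noteq> 0" and "j \<le> n"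
  shows "poly (continuant b j) m \<ge> 0"
proof (cases "j = 0")
  case False
  show ?thesis
  proof (rule poly_nonneg_right_of_roots[where b = "max (m + 1) 2"])
    show "\<forall>y>m. poly (continuant b j) y \<noteq> 0"
      using no_root \<open>j \<le> n\<close> False by auto
    show "poly (continuant b j) (max (m + 1) 2) > 0"
      using continuant_ge_one[OF b _ \<open>j \<le> n\<close>, of "max (m + 1) 2"] by simp
  qed auto
qed simp

lemma continuant_largest_root:
  fixes b :: "nat \<Rightarrow> real"
  assumes n: "n \<ge> 2" and b: "\<forall>i\<in>{1..n}. b i \<ge> 1"
  obtains m where "m > 0" and "poly (continuant b n) m = 0"
    and "\<forall>j<n. poly (continuant b j) m > 0" and "\<forall>\<mu>>m. poly (continuant b n) \<mu> \<noteq> 0"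
proof -
  let ?Q = "\<lambda>j. poly (continuant b j)"
  txt \<open>The largest zero of all of Q_1, ..., Q_n; by the recurrence it can only be a zero of Q_n.\<close>
  define Z where "Z = (\<Union>j\<in>{1..n}. {\<mu>. ?Q j \<mu> = 0})"
  have "continuant b j \<noteq> 0" if "j \<le> n" for j
    using continuant_ge_one[OF b _ that, of 2] by auto
  then have "finite Z"
    unfolding Z_def by (auto intro: poly_roots_finite)
  moreover have "0 \<in> Z"
    unfolding Z_def using n by (auto intro!: bexI[of _ 1])
  define m where "m = Max Z"
  have "m \<in> Z"
    unfolding m_def using \<open>finite Z\<close> \<open>0 \<in> Z\<close> by (intro Max_in) auto
  have above: "\<mu> \<notin> Z" if "\<mu> > m" for \<mu>
    using Max_ge[OF \<open>finite Z\<close>, of \<mu>] that unfolding m_def by auto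
  have "\<forall>j\<le>n. ?Q j m \<ge> 0"
    using continuant_nonneg_beyond_roots[OF b] above unfolding Z_def by blast
  then have pos: "\<forall>j<n. ?Q j m > 0"
    using continuant_pos_of_nonneg by blast
  from \<open>m \<in> Z\<close> obtain j where "j \<in> {1..n}" and "?Q j m = 0"
    unfolding Z_def by auto
  with pos have "?Q n m = 0"
    by (metis atLeastAtMost_iff le_neq_implies_less less_irrefl)
  moreover have "m > 0"
  proof -
    have "0 < ?Q 1 m"
      using pos n by (simp del: continuant.simps)
    moreover have "b 1 \<ge> 1"
      using b n by simp
    ultimately show ?thesis
      by (simp add: zero_less_mult_iff)
  qed
  moreover have "\<forall>\<mu>>m. ?Q n \<mu> \<noteq> 0"
    using above n unfolding Z_def by auto
  ultimately show thesis
    using that pos by blast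
qed

lemma continuant_root_less:
  fixes b c :: "nat \<Rightarrow> real"
  assumes b_nonneg: "\<forall>i\<in>{1..n}. b i \<ge> 0" and c_le_b: "\<forall>i\<in>{1..n}. c i \<le> b i"
    and k: "k \<in> {1..n}" "c k < b k"
    and root_b: "poly (continuant b n) x = 0" and pos_b: "\<forall>j<n. poly (continuant b j) x > 0"
    and root_c: "poly (continuant c n) y = 0" and pos_c: "\<forall>j<n. poly (continuant c j) y > 0"
    and "y > 0"
  shows "x < y"
proof (rule ccontr)
  txt \<open>If y \<le> x, every term of the Christoffel-Darboux sum at (x, y) is nonnegative and the
    k-th is positive, yet the sum vanishes since x and y are roots.\<close>
  assume "\<not> x < y"
  then have weight: "x * b i - y * c i \<ge> y * (b i - c i)" if "i \<in> {1..n}" for i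
    using b_nonneg that by (simp add: right_diff_distrib mult_right_mono)
  obtain m where m: "n = Suc m"
    using root_b by (cases n) auto
  define T where
    "T j = (x * b (Suc j) - y * c (Suc j)) * poly (continuant b j) x * poly (continuant c j) y" for j
  have "sum T {..<n} = 0"
    unfolding T_def m continuant_christoffel_darboux using root_b root_c m by simp
  moreover have "sum T {..<n} > 0"
  proof (rule sum_pos2[where i = "k - 1"])
    have "x * b k - y * c k > 0"
      using weight[OF k(1)] k(2) \<open>y > 0\<close> by (smt (verit) mult_pos_pos)
    then show "0 < T (k - 1)"
      unfolding T_def using k pos_b pos_c by auto
    show "0 \<le> T j" if "j \<in> {..<n}" for j
    proof -
      have "Suc j \<in> {1..n}"
        using that by auto
      then have "x * b (Suc j) - y * c (Suc j) \<ge> 0"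
        using weight c_le_b \<open>y > 0\<close> by (smt (verit) mult_nonneg_nonneg)
      then show ?thesis
        unfolding T_def using pos_b pos_c that
        by (intro mult_nonneg_nonneg) (auto simp: less_imp_le)
    qed
  qed (use k in auto)
  ultimately show False
    by simp
qed

lemma minus_recip_less_iff:
  fixes s t :: real
  assumes "s > 0" and "t > 0"
  shows "s - 1 / s < t - 1 / t \<longleftrightarrow> s < t"
proof
  assume "s < t"
  then have "1 / t < 1 / s"
    using assms by (simp add: frac_less2)
  with \<open>s < t\<close> show "s - 1 / s < t - 1 / t"
    by simp
next
  assume less: "s - 1 / s < t - 1 / t"
  show "s < t"
  proof (rule ccontr)
    assume "\<not> s < t"
    then have "1 / s \<le> 1 / t"
      using assms by (simp add: frac_le)
    with \<open>\<not> s < t\<close> less show False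
      by simp
  qed
qed

lemma ex_pos_minus_recip_eq: "\<exists>s>0. s - 1 / s = (m :: real)"
proof -
  define s where "s = (m + sqrt (m\<^sup>2 + 4)) / 2"
  have "\<bar>m\<bar> < sqrt (m\<^sup>2 + 4)"
    using real_sqrt_less_mono[of "m\<^sup>2" "m\<^sup>2 + 4"] by simp
  then have "m + sqrt (m\<^sup>2 + 4) > 0"
    using abs_ge_minus_self[of m] by linarith
  then have "s > 0"
    unfolding s_def by simp
  have "(sqrt (m\<^sup>2 + 4))\<^sup>2 = m\<^sup>2 + 4"
    by simp
  then have "s * s = m * s + 1"
    unfolding s_def by (simp add: field_simps power2_eq_square)
  with \<open>s > 0\<close> have "s - 1 / s = m"
    by (simp add: field_simps)
  with \<open>s > 0\<close> show ?thesis
    by blast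
qed

lemma delta_alt_seq:
  assumes pos: "\<forall>i\<in>{1..n}. a i > 0"
    and root: "poly (continuant (\<lambda>i. real_of_int (a i)) n) m = 0"
    and largest: "\<forall>\<mu>>m. poly (continuant (\<lambda>i. real_of_int (a i)) n) \<mu> \<noteq> 0"
    and s: "s > 0" "s - 1 / s = m"
  shows "delta (alt_seq a n) = s\<^sup>2"
proof -
  let ?P = "map_poly (of_int :: int \<Rightarrow> real) (alexander_poly (alt_seq a n))"
  have "poly ?P 0 \<noteq> 0"
    using pos by (intro poly_alexander_poly_alt_seq_0) auto
  then have "finite {x. poly ?P x = 0}"
    by (intro poly_roots_finite) auto
  moreover have "poly ?P (s\<^sup>2) = 0"
    using poly_alexander_poly_alt_seq_square[of s a n] s root by simp
  moreover have "x \<le> s\<^sup>2" if "poly ?P x = 0" for x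
  proof -
    define t where "t = sqrt x"
    have "x > 0"
      using alexander_poly_alt_seq_real_root_pos[OF pos that] .
    then have "t > 0" and "t\<^sup>2 = x"
      by (auto simp: t_def)
    then have "poly (continuant (\<lambda>i. real_of_int (a i)) n) (t - 1 / t) = 0"
      using poly_alexander_poly_alt_seq_square[of t a n] that by (simp add: alexander_sign_nonzero)
    then have "t \<le> s"
      using largest minus_recip_less_iff[OF s(1) \<open>t > 0\<close>] s(2) by force
    with \<open>t > 0\<close> \<open>t\<^sup>2 = x\<close> show ?thesis
      by (auto intro: power_mono)
  qed
  ultimately show ?thesis
    unfolding delta_def by (intro Max_eqI) auto
qed

lemma delta_alt_seq_less:
  assumes "n \<ge> 2" and pos: "\<forall>i\<in>{1..n}. a' i > 0"
    and le: "\<forall>i\<in>{1..n}. a' i \<le> a i" and k: "k \<in> {1..n}" "a' k < a k"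
  shows "delta (alt_seq a n) < delta (alt_seq a' n)"
proof -
  have pos_a: "\<forall>i\<in>{1..n}. a i > 0"
    using pos le by fastforce
  have ge_one: "\<forall>i\<in>{1..n}. real_of_int (c i) \<ge> 1"
    if "\<forall>i\<in>{1..n}. c i > 0" for c :: "nat \<Rightarrow> int"
    using that by (simp add: int_one_le_iff_zero_less[symmetric])
  obtain m where m: "m > 0" "poly (continuant (\<lambda>i. real_of_int (a i)) n) m = 0"
    "\<forall>j<n. poly (continuant (\<lambda>i. real_of_int (a i)) j) m > 0"
    "\<forall>\<mu>>m. poly (continuant (\<lambda>i. real_of_int (a i)) n) \<mu> \<noteq> 0"
    by (rule continuant_largest_root[OF \<open>n \<ge> 2\<close> ge_one[OF pos_a]])
  obtain m' where m': "m' > 0" "poly (continuant (\<lambda>i. real_of_int (a' i)) n) m' = 0"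
    "\<forall>j<n. poly (continuant (\<lambda>i. real_of_int (a' i)) j) m' > 0"
    "\<forall>\<mu>>m'. poly (continuant (\<lambda>i. real_of_int (a' i)) n) \<mu> \<noteq> 0"
    by (rule continuant_largest_root[OF \<open>n \<ge> 2\<close> ge_one[OF pos]])
  have "m < m'"
  proof (rule continuant_root_less[where k = k])
    show "\<forall>i\<in>{1..n}. 0 \<le> real_of_int (a i)"
      using pos_a by (simp add: less_imp_le)
  qed (use le k m m' in simp_all)
  obtain s where s: "s > 0" "s - 1 / s = m"
    using ex_pos_minus_recip_eq by blast
  obtain s' where s': "s' > 0" "s' - 1 / s' = m'"
    using ex_pos_minus_recip_eq by blast
  have "s < s'"
    using minus_recip_less_iff[OF s(1) s'(1)] s(2) s'(2) \<open>m < m'\<close> by simp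
  then have "s\<^sup>2 < s'\<^sup>2"
    using s(1) by (simp add: power_strict_mono)
  then show ?thesis
    using delta_alt_seq[OF pos_a m(2,4) s] delta_alt_seq[OF pos m'(2,4) s'] by simp
qed

theorem theorem9p7:
  fixes a :: "nat \<Rightarrow> int" and n k :: nat
  assumes "n \<ge> 2"
    and "\<forall>i\<in>{1..n}. a i > 0"
    and "1 \<le> k" and "k \<le> n"
    and "a k > 1"
  shows "only_real_zeros (alexander_poly (alt_seq a n))
       \<and> only_real_zeros (alexander_poly (alt_seq (a(k := a k - 1)) n))
       \<and> delta (alt_seq a n) < delta (alt_seq (a(k := a k - 1)) n)"
proof -
  have pos': "\<forall>i\<in>{1..n}. (a(k := a k - 1)) i > 0"
    using assms by auto
  have "delta (alt_seq a n) < delta (alt_seq (a(k := a k - 1)) n)"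
    by (rule delta_alt_seq_less[OF \<open>n \<ge> 2\<close> pos', where k = k]) (use assms in auto)
  with only_real_zeros_alexander_poly_alt_seq[OF assms(2)]
    only_real_zeros_alexander_poly_alt_seq[OF pos'] show ?thesis
    by blast
qed

end
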